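(* For every $A \in S(2n,\mathbb{R})$ and every $P \in \operatorname{Sp}(2n)$, $\operatorname{Pf}(P^T A P) = \operatorname{Pf}(A)$ and $\operatorname{s}(P^T A P) = \operatorname{s}(A)$; i.e. the Pfaffian and the sum function are invariant under the action $\rho(P,A) = P^T A P$.
   Context: $S(2n,\mathbb{R}) = \{A \in M(2n,\mathbb{R}) : A^T = -A,\ \det A\neq 0\}$. $J$ is the $2n\times 2n$ block-diagonal matrix with $n$ diagonal blocks $J_0 = \begin{bmatrix} 0 & 1 \\ -1 & 0\end{bmatrix}$, and $\operatorname{Sp}(2n) = \{P\in M(2n,\mathbb{R}) : P^T J P = J\}$. $\operatorname{Pf}(A) = \frac{1}{2^n n!}\sum_{\sigma\in S_{2n}}\operatorname{sgn}(\sigma)\prod_{i=1}^n A_{\sigma(2i-1),\sigma(2i)}$, and $\operatorname{s}(A) = \sum_{i=1}^n A_{2i-1,2i}$. *)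

theory Defs
  imports "Jordan_Normal_Form.Determinant"
begin

text \<open>Matrices are indexed from 0. The 2n x 2n matrix J is block diagonal with
  n blocks [[0,1],[-1,0]]: J(2i,2i+1) = 1, J(2i+1,2i) = -1, all other entries 0.\<close>

definition Jsymp :: "nat \<Rightarrow> real mat" where
  "Jsymp n = mat (2*n) (2*n) (\<lambda>(i,j).
     if even i \<and> j = i + 1 then 1 else if odd i \<and> i = j + 1 then -1 else 0)"

definition skew_nonsing :: "nat \<Rightarrow> real mat set" where
  "skew_nonsing n = {A \<in> carrier_mat (2*n) (2*n). transpose_mat A = - A \<and> det A \<noteq> 0}"

definition Sp :: "nat \<Rightarrow> real mat set" where
  "Sp n = {P \<in> carrier_mat (2*n) (2*n). transpose_mat P * Jsymp n * P = Jsymp n}"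

definition Pf :: "nat \<Rightarrow> real mat \<Rightarrow> real" where
  "Pf n A = (1 / (2^n * fact n)) *
     (\<Sum>\<sigma> \<in> {\<sigma>. \<sigma> permutes {0..<2*n}}.
        signof \<sigma> * (\<Prod>i<n. A $$ (\<sigma> (2*i), \<sigma> (2*i+1))))"

definition ssum :: "nat \<Rightarrow> real mat \<Rightarrow> real" where
  "ssum n A = (\<Sum>i<n. A $$ (2*i, 2*i+1))"

end

theory Submission
  imports Defs
begin

(* For any square B, expanding the entries of B^T A B and regrouping the terms by the rows of B
   that are picked shows Pf (B^T A B) = det B * Pf A, with no skew-symmetry needed. For symplectic
   P this gives Pf J = det P * Pf J, and Pf J > 0: a permutation contributing a nonzero term to
   Pf J maps the index pairs {2i, 2i+1} onto such pairs, and its sign and its product of entries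
   of J both equal (-1)^k, where k is the number of pairs it reverses. Hence det P = 1.
   For skew X one has s(X) = tr(J^T X) / 2, and P J^T P^T = J^T because J^T is the inverse of J,
   so tr(J^T P^T A P) = tr(P J^T P^T A) = tr(J^T A). *)

lemma prod_lessThan_pairs:
  fixes f :: "nat \<Rightarrow> 'a::comm_monoid_mult"
  shows "(\<Prod>j<2*n. f j) = (\<Prod>i<n. f (2*i) * f (2*i+1))"
  by (induction n) (simp_all add: mult_ac)

lemma sum_lessThan_pairs:
  fixes f :: "nat \<Rightarrow> 'a::comm_monoid_add"
  shows "(\<Sum>j<2*n. f j) = (\<Sum>i<n. f (2*i) + f (2*i+1))"
  by (induction n) (simp_all add: add_ac)

(* Index maps are the identity beyond 2*m, as permutations of {0..<2*m} are. *)

lemma prod_pair_sums_expand: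
  fixes T :: "nat \<Rightarrow> nat \<Rightarrow> nat \<Rightarrow> 'a::comm_semiring_1"
  shows "(\<Prod>i<m. \<Sum>a<N. \<Sum>b<N. T i a b) =
    (\<Sum>f \<in> {f. (\<forall>j<2*m. f j < N) \<and> (\<forall>j\<ge>2*m. f j = j)}. \<Prod>i<m. T i (f (2*i)) (f (2*i+1)))"
proof -
  define pairs where "pairs f = (\<lambda>i\<in>{..<m}. (f (2*i), f (2*i+1)))" for f :: "nat \<Rightarrow> nat"
  define unpair where
    "unpair g j = (if j < 2*m then (if even j then fst else snd) (g (j div 2)) else j)"
    for g :: "nat \<Rightarrow> nat \<times> nat" and j
  have "(\<Prod>i<m. \<Sum>a<N. \<Sum>b<N. T i a b) = (\<Prod>i<m. \<Sum>ab \<in> {..<N} \<times> {..<N}. case_prod (T i) ab)"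
    by (simp add: sum.cartesian_product)
  also have "\<dots> = (\<Sum>g \<in> PiE {..<m} (\<lambda>_. {..<N} \<times> {..<N}). \<Prod>i<m. case_prod (T i) (g i))"
    by (rule prod_sum_PiE) auto
  also have "\<dots> = (\<Sum>f \<in> {f. (\<forall>j<2*m. f j < N) \<and> (\<forall>j\<ge>2*m. f j = j)}. \<Prod>i<m. T i (f (2*i)) (f (2*i+1)))"
  proof (rule sum.reindex_bij_witness[where i = pairs and j = unpair])
    fix g assume g: "g \<in> PiE {..<m} (\<lambda>_. {..<N} \<times> {..<N})"
    show "pairs (unpair g) = g"
    proof
      fix i show "pairs (unpair g) i = g i"
        using g by (cases "i < m") (auto simp: pairs_def unpair_def PiE_def extensional_def)
    qed
    show "unpair g \<in> {f. (\<forall>j<2*m. f j < N) \<and> (\<forall>j\<ge>2*m. f j = j)}"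
    proof (intro CollectI conjI allI impI)
      fix j assume "j < 2*m"
      then have "g (j div 2) \<in> {..<N} \<times> {..<N}" using PiE_mem[OF g] by simp
      then show "unpair g j < N" using \<open>j < 2*m\<close> by (auto simp: unpair_def)
    qed (simp add: unpair_def)
    show "(\<Prod>i<m. T i (unpair g (2*i)) (unpair g (2*i+1))) = (\<Prod>i<m. case_prod (T i) (g i))"
      by (rule prod.cong) (auto simp: unpair_def split: prod.split)
  next
    fix f assume f: "f \<in> {f. (\<forall>j<2*m. f j < N) \<and> (\<forall>j\<ge>2*m. f j = j)}"
    show "unpair (pairs f) = f"
    proof
      fix j show "unpair (pairs f) j = f j"
        using f by (cases "even j") (auto simp: unpair_def pairs_def elim!: evenE oddE)
    qed
    show "pairs f \<in> PiE {..<m} (\<lambda>_. {..<N} \<times> {..<N})"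
      using f by (auto simp: pairs_def)
  qed
  finally show ?thesis .
qed

lemma index_transpose_mult_mult:
  fixes A B :: "'a::comm_semiring_0 mat"
  assumes A: "A \<in> carrier_mat N N" and B: "B \<in> carrier_mat N M" and "k < M" "l < M"
  shows "(transpose_mat B * A * B) $$ (k,l) = (\<Sum>a<N. \<Sum>b<N. B $$ (a,k) * A $$ (a,b) * B $$ (b,l))"
proof -
  have "transpose_mat B * A * B = transpose_mat B * (A * B)"
    using A B by (auto intro: assoc_mult_mat)
  then show ?thesis
    using assms by (simp add: scalar_prod_def atLeast0LessThan sum_distrib_left mult.assoc)
qed

lemma permutes_less:
  fixes \<sigma> :: "nat \<Rightarrow> nat"
  shows "\<sigma> permutes {0..<N} \<Longrightarrow> j < N \<Longrightarrow> \<sigma> j < N"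
  using permutes_in_image[of \<sigma> "{0..<N}" j] by auto

lemma det_select_rows:
  fixes B :: "'a::comm_ring_1 mat"
  assumes B: "B \<in> carrier_mat N N" and f: "\<forall>j<N. f j < N" "\<forall>j\<ge>N. f j = j"
  shows "det (mat N N (\<lambda>(j,k). B $$ (f j, k))) = (if f permutes {0..<N} then signof f * det B else 0)"
proof (cases "f permutes {0..<N}")
  case True
  then show ?thesis using det_permute_rows[OF B] by simp
next
  case False
  then have "\<not> inj_on f {0..<N}"
    using f inj_on_nat_permutes[of f "{0..<N}"] by auto
  then obtain i j where "f i = f j" "i \<noteq> j" "i < N" "j < N"
    unfolding inj_on_def by auto
  then have "det (mat N N (\<lambda>(j,k). B $$ (f j, k))) = 0"
    by (intro det_identical_rows[where i = i and j = j]) auto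
  then show ?thesis using False by simp
qed

lemma prod_congruence_entries_expand:
  fixes A B :: "'a::comm_semiring_1 mat"
  assumes A: "A \<in> carrier_mat N N" and B: "B \<in> carrier_mat N (2*n)" and \<sigma>: "\<And>j. j < 2*n \<Longrightarrow> \<sigma> j < 2*n"
  shows "(\<Prod>i<n. (transpose_mat B * A * B) $$ (\<sigma> (2*i), \<sigma> (2*i+1)))
    = (\<Sum>f\<in>{f. (\<forall>j<2*n. f j < N) \<and> (\<forall>j\<ge>2*n. f j = j)}.
         (\<Prod>i<n. A $$ (f (2*i), f (2*i+1))) * (\<Prod>j<2*n. B $$ (f j, \<sigma> j)))"
proof -
  have "(\<Prod>i<n. (transpose_mat B * A * B) $$ (\<sigma> (2*i), \<sigma> (2*i+1)))
     = (\<Prod>i<n. \<Sum>a<N. \<Sum>b<N. B $$ (a, \<sigma> (2*i)) * A $$ (a,b) * B $$ (b, \<sigma> (2*i+1)))"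
    by (intro prod.cong refl index_transpose_mult_mult[OF A B]) (auto intro!: \<sigma>)
  also have "\<dots> = (\<Sum>f\<in>{f. (\<forall>j<2*n. f j < N) \<and> (\<forall>j\<ge>2*n. f j = j)}.
      \<Prod>i<n. B $$ (f (2*i), \<sigma> (2*i)) * A $$ (f (2*i), f (2*i+1)) * B $$ (f (2*i+1), \<sigma> (2*i+1)))"
    by (rule prod_pair_sums_expand)
  also have "\<dots> = (\<Sum>f\<in>{f. (\<forall>j<2*n. f j < N) \<and> (\<forall>j\<ge>2*n. f j = j)}.
      (\<Prod>i<n. A $$ (f (2*i), f (2*i+1))) * (\<Prod>i<n. B $$ (f (2*i), \<sigma> (2*i)) * B $$ (f (2*i+1), \<sigma> (2*i+1))))"
    unfolding prod.distrib[symmetric] by (intro sum.cong prod.cong refl) (simp add: mult_ac)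
  also have "\<dots> = (\<Sum>f\<in>{f. (\<forall>j<2*n. f j < N) \<and> (\<forall>j\<ge>2*n. f j = j)}.
      (\<Prod>i<n. A $$ (f (2*i), f (2*i+1))) * (\<Prod>j<2*n. B $$ (f j, \<sigma> j)))"
    by (simp only: prod_lessThan_pairs)
  finally show ?thesis .
qed

lemma Pf_congruence:
  assumes A: "A \<in> carrier_mat (2*n) (2*n)" and B: "B \<in> carrier_mat (2*n) (2*n)"
  shows "Pf n (transpose_mat B * A * B) = det B * Pf n A"
proof -
  let ?PU = "{\<sigma>. \<sigma> permutes {0..<2*n}}"
  let ?F = "{f. (\<forall>j<2*n. f j < 2*n) \<and> (\<forall>j\<ge>2*n. f j = j)}"
  let ?term = "\<lambda>M f. \<Prod>i<n. M $$ (f (2*i), f (2*i+1))"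
  have det_rows: "det (mat (2*n) (2*n) (\<lambda>(j,k). B $$ (f j, k)))
      = (\<Sum>\<sigma>\<in>?PU. signof \<sigma> * (\<Prod>j<2*n. B $$ (f j, \<sigma> j)))" for f
    by (subst det_def'[of _ "2*n"])
      (auto simp: atLeast0LessThan[symmetric] permutes_less intro!: sum.cong prod.cong)
  have "(\<Sum>\<sigma>\<in>?PU. signof \<sigma> * ?term (transpose_mat B * A * B) \<sigma>)
      = (\<Sum>\<sigma>\<in>?PU. signof \<sigma> * (\<Sum>f\<in>?F. ?term A f * (\<Prod>j<2*n. B $$ (f j, \<sigma> j))))"
    by (intro sum.cong refl arg_cong2[where f = "(*)"] prod_congruence_entries_expand[OF A B])
      (auto intro: permutes_less)
  also have "\<dots> = (\<Sum>f\<in>?F. ?term A f * (\<Sum>\<sigma>\<in>?PU. signof \<sigma> * (\<Prod>j<2*n. B $$ (f j, \<sigma> j))))"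
    unfolding sum_distrib_left by (subst sum.swap) (simp add: mult_ac)
  also have "\<dots> = (\<Sum>f\<in>?F. ?term A f * det (mat (2*n) (2*n) (\<lambda>(j,k). B $$ (f j, k))))"
    by (simp only: det_rows)
  also have "\<dots> = (\<Sum>f\<in>?F. if f permutes {0..<2*n} then ?term A f * (signof f * det B) else 0)"
    by (intro sum.cong refl) (simp add: det_select_rows[OF B])
  also have "\<dots> = (\<Sum>\<sigma>\<in>{f \<in> ?F. f permutes {0..<2*n}}. ?term A \<sigma> * (signof \<sigma> * det B))"
  proof (rule sum.inter_filter[symmetric])
    have "?F = {f. (\<forall>i\<in>{0..<2*n}. f i \<in> {0..<2*n}) \<and> (\<forall>i. i \<notin> {0..<2*n} \<longrightarrow> f i = i)}"
      by auto
    then show "finite ?F"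
      using finite_bounded_functions[of "{0..<2*n}" "{0..<2*n}"] by simp
  qed
  also have "{f \<in> ?F. f permutes {0..<2*n}} = ?PU"
    by (auto simp: permutes_less permutes_not_in)
  finally show ?thesis
    unfolding Pf_def by (simp add: sum_distrib_left mult_ac)
qed

lemma Jsymp_carrier: "Jsymp n \<in> carrier_mat (2*n) (2*n)"
  by (simp add: Jsymp_def)

lemma Jsymp_index:
  assumes "a < 2*n" "b < 2*n"
  shows "Jsymp n $$ (a,b) = (if even a \<and> b = a + 1 then 1 else if odd a \<and> a = b + 1 then -1 else 0)"
  using assms by (simp add: Jsymp_def)

lemma Jsymp_index_eq_0:
  assumes "a < 2*n" "b < 2*n" "a div 2 \<noteq> b div 2"
  shows "Jsymp n $$ (a,b) = 0"
  using assms by (auto simp: Jsymp_index elim!: evenE oddE)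

lemma Jsymp_col:
  assumes "a < 2*n" "c < 2*n"
  shows "Jsymp n $$ (c,a) = (if even a then (if c = a+1 then -1 else 0) else (if c = a-1 then 1 else 0))"
  using assms by (auto simp: Jsymp_index elim!: evenE oddE)

definition pair_lift :: "(nat \<Rightarrow> nat) \<Rightarrow> nat \<Rightarrow> nat" where
  "pair_lift \<pi> j = 2 * \<pi> (j div 2) + j mod 2"

lemma pair_lift_double: "pair_lift \<pi> (2*i) = 2 * \<pi> i"
  by (simp add: pair_lift_def)

lemma pair_lift_id: "pair_lift id = id"
  by (simp add: pair_lift_def fun_eq_iff)

lemma pair_lift_comp: "pair_lift (p \<circ> q) = pair_lift p \<circ> pair_lift q"
  by (simp add: pair_lift_def fun_eq_iff)

lemma pair_lift_transpose:
  "pair_lift (transpose a b) = transpose (2*a) (2*b) \<circ> transpose (2*a+1) (2*b+1)"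
  by (auto simp: pair_lift_def fun_eq_iff transpose_def)

lemma sign_pair_lift:
  assumes "\<pi> permutes {0..<n}"
  shows "sign (pair_lift \<pi>) = 1"
proof -
  have "permutation (pair_lift \<pi>) \<and> sign (pair_lift \<pi>) = 1"
    using assms finite_atLeastLessThan
  proof (induction rule: permutes_induct)
    case id
    then show ?case by (simp add: pair_lift_id[unfolded id_def] permutation_id[unfolded id_def])
  next
    case (swap a b p)
    let ?t = "transpose (2*a) (2*b) \<circ> transpose (2*a+1) (2*b+1)"
    have t: "permutation ?t" "sign ?t = 1"
      using \<open>a \<noteq> b\<close> by (simp_all add: permutation_compose permutation_swap_id sign_compose sign_swap_id)
    have lift: "pair_lift (transpose a b \<circ> p) = ?t \<circ> pair_lift p"
      by (simp add: pair_lift_comp pair_lift_transpose)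
    from swap.IH have IH: "permutation (pair_lift p)" "sign (pair_lift p) = 1" by auto
    have "permutation (?t \<circ> pair_lift p)"
      by (rule permutation_compose[OF t(1) IH(1)])
    moreover have "sign (?t \<circ> pair_lift p) = 1"
      using sign_compose[OF t(1) IH(1)] t(2) IH(2) by simp
    ultimately show ?case
      unfolding lift ..
  qed
  then show ?thesis ..
qed

definition pair_swaps :: "nat set \<Rightarrow> nat \<Rightarrow> nat" where
  "pair_swaps S j = (if j div 2 \<in> S then (if even j then j + 1 else j - 1) else j)"

lemma pair_swaps_insert: "k \<notin> S \<Longrightarrow> pair_swaps (insert k S) = pair_swaps S \<circ> transpose (2*k) (2*k+1)"
  by (auto simp: pair_swaps_def fun_eq_iff transpose_def)

lemma pair_swaps_permutation_sign:
  assumes "finite S"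
  shows "permutation (pair_swaps S) \<and> sign (pair_swaps S) = (-1) ^ card S"
  using assms
proof (induction rule: finite_induct)
  case empty
  have "pair_swaps {} = id" by (simp add: pair_swaps_def fun_eq_iff)
  then show ?case by simp
next
  case (insert k S)
  have t: "permutation (transpose (2*k) (2*k+1))" "sign (transpose (2*k) (2*k+1)) = -1"
    by (simp_all add: permutation_swap_id sign_swap_id)
  from insert.IH have IH: "permutation (pair_swaps S)" "sign (pair_swaps S) = (-1) ^ card S" by auto
  have "permutation (pair_swaps S \<circ> transpose (2*k) (2*k+1))"
    by (rule permutation_compose[OF IH(1) t(1)])
  moreover have "sign (pair_swaps S \<circ> transpose (2*k) (2*k+1)) = (-1) ^ card (insert k S)"
    using sign_compose[OF IH(1) t(1)] IH(2) t(2) insert.hyps by simp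
  ultimately show ?case
    unfolding pair_swaps_insert[OF \<open>k \<notin> S\<close>] ..
qed

definition pair_preserving :: "nat \<Rightarrow> (nat \<Rightarrow> nat) \<Rightarrow> bool" where
  "pair_preserving n \<sigma> \<longleftrightarrow> (\<forall>i<n. \<sigma> (2*i) div 2 = \<sigma> (2*i+1) div 2)"

lemma pair_preserving_partner:
  fixes \<sigma> :: "nat \<Rightarrow> nat"
  assumes \<sigma>: "\<sigma> permutes {0..<2*n}" and pairs: "pair_preserving n \<sigma>"
    and i: "i < n"
  shows "\<sigma> (2*i+1) = (if even (\<sigma> (2*i)) then \<sigma> (2*i) + 1 else \<sigma> (2*i) - 1)"
proof -
  have "\<sigma> (2*i) \<noteq> \<sigma> (2*i+1)"
    using permutes_inj[OF \<sigma>] by (auto dest: injD)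
  moreover have "\<sigma> (2*i) div 2 = \<sigma> (2*i+1) div 2"
    using pairs i unfolding pair_preserving_def by blast
  ultimately show ?thesis by presburger
qed

lemma pair_preserving_decomp:
  fixes \<sigma> :: "nat \<Rightarrow> nat"
  assumes \<sigma>: "\<sigma> permutes {0..<2*n}" and pairs: "pair_preserving n \<sigma>"
  shows "\<sigma> \<circ> pair_swaps {i. i < n \<and> odd (\<sigma> (2*i))} = pair_lift (\<lambda>i. if i < n then \<sigma> (2*i) div 2 else i)"
proof
  fix j
  show "(\<sigma> \<circ> pair_swaps {i. i < n \<and> odd (\<sigma> (2*i))}) j = pair_lift (\<lambda>i. if i < n then \<sigma> (2*i) div 2 else i) j"
  proof (cases "j < 2*n")
    case True
    then show ?thesis
      using pair_preserving_partner[OF \<sigma> pairs, of "j div 2"]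
      by (auto simp: pair_swaps_def pair_lift_def elim!: evenE oddE)
  next
    case False
    then have "\<not> j div 2 < n" by simp
    then show ?thesis
      using permutes_not_in[OF \<sigma>, of j] False by (simp add: pair_swaps_def pair_lift_def)
  qed
qed

lemma pair_preserving_permutes_pairs:
  fixes \<sigma> :: "nat \<Rightarrow> nat"
  assumes \<sigma>: "\<sigma> permutes {0..<2*n}" and pairs: "pair_preserving n \<sigma>"
  shows "(\<lambda>i. if i < n then \<sigma> (2*i) div 2 else i) permutes {0..<n}"
    (is "?\<pi> permutes _")
proof (rule inj_on_nat_permutes)
  have "inj (\<sigma> \<circ> pair_swaps {i. i < n \<and> odd (\<sigma> (2*i))})"
    using pair_swaps_permutation_sign[of "{i. i < n \<and> odd (\<sigma> (2*i))}"]
    by (intro inj_compose permutes_inj[OF \<sigma>] bij_is_inj permutation_bijective) auto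
  then have inj: "inj (pair_lift ?\<pi>)"
    by (simp only: pair_preserving_decomp[OF \<sigma> pairs])
  show "inj_on ?\<pi> {0..<n}"
  proof (rule inj_onI)
    fix i i' assume "?\<pi> i = ?\<pi> i'"
    then have "pair_lift ?\<pi> (2*i) = pair_lift ?\<pi> (2*i')"
      unfolding pair_lift_double by (rule arg_cong)
    then have "2*i = 2*i'" by (rule injD[OF inj])
    then show "i = i'" by simp
  qed
  show "?\<pi> \<in> {0..<n} \<rightarrow> {0..<n}"
  proof
    fix i assume i: "i \<in> {0..<n}"
    then have "\<sigma> (2*i) < 2*n" by (intro permutes_less[OF \<sigma>]) simp
    then show "?\<pi> i \<in> {0..<n}" using i by simp
  qed
qed simp_all

lemma signof_Jsymp_term_pair_preserving:
  fixes \<sigma> :: "nat \<Rightarrow> nat"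
  assumes \<sigma>: "\<sigma> permutes {0..<2*n}" and pairs: "pair_preserving n \<sigma>"
  shows "signof \<sigma> * (\<Prod>i<n. Jsymp n $$ (\<sigma> (2*i), \<sigma> (2*i+1))) = (1::real)"
proof -
  define S where "S = {i. i < n \<and> odd (\<sigma> (2*i))}"
  have "(\<Prod>i<n. Jsymp n $$ (\<sigma> (2*i), \<sigma> (2*i+1))) = (\<Prod>i<n. if i \<in> S then -1 else 1)"
  proof (rule prod.cong[OF refl])
    fix i assume "i \<in> {..<n}"
    then show "Jsymp n $$ (\<sigma> (2*i), \<sigma> (2*i+1)) = (if i \<in> S then -1 else 1)"
      using pair_preserving_partner[OF \<sigma> pairs, of i] permutes_less[OF \<sigma>, of "2*i"] permutes_less[OF \<sigma>, of "2*i+1"]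
      by (auto simp: Jsymp_index S_def)
  qed
  also have "\<dots> = (-1) ^ card S"
    by (simp add: prod.If_cases S_def Int_def)
  finally have J_term: "(\<Prod>i<n. Jsymp n $$ (\<sigma> (2*i), \<sigma> (2*i+1))) = (-1) ^ card S" .
  have S: "permutation (pair_swaps S)" "sign (pair_swaps S) = (-1) ^ card S"
    using pair_swaps_permutation_sign[of S] by (auto simp: S_def)
  have "sign \<sigma> * (-1) ^ card S = sign (\<sigma> \<circ> pair_swaps S)"
    using sign_compose[OF permutes_imp_permutation[OF _ \<sigma>] S(1)] S(2) by simp
  also have "\<dots> = 1"
    unfolding S_def pair_preserving_decomp[OF \<sigma> pairs]
    by (rule sign_pair_lift[OF pair_preserving_permutes_pairs[OF \<sigma> pairs]])
  finally show ?thesis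
    unfolding J_term by (metis of_int_1 of_int_minus of_int_mult of_int_power)
qed

lemma Pf_Jsymp_pos: "Pf n (Jsymp n) > 0"
proof -
  let ?t = "\<lambda>\<sigma>. signof \<sigma> * (\<Prod>i<n. Jsymp n $$ (\<sigma> (2*i), \<sigma> (2*i+1))) :: real"
  have nonneg: "0 \<le> ?t \<sigma>" if \<sigma>: "\<sigma> permutes {0..<2*n}" for \<sigma>
  proof (cases "pair_preserving n \<sigma>")
    case True
    then show ?thesis using signof_Jsymp_term_pair_preserving[OF \<sigma>] by simp
  next
    case False
    then obtain i where "i < n" "\<sigma> (2*i) div 2 \<noteq> \<sigma> (2*i+1) div 2"
      unfolding pair_preserving_def by auto
    then have "Jsymp n $$ (\<sigma> (2*i), \<sigma> (2*i+1)) = 0"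
      by (intro Jsymp_index_eq_0 permutes_less[OF \<sigma>]) auto
    then have "(\<Prod>i<n. Jsymp n $$ (\<sigma> (2*i), \<sigma> (2*i+1))) = 0"
      using \<open>i < n\<close> by (intro prod_zero bexI[of _ i]) auto
    then show ?thesis by (simp only: mult_zero_right order_refl)
  qed
  have "?t id = 1"
    using signof_Jsymp_term_pair_preserving[OF permutes_id] by (simp add: pair_preserving_def)
  then have "1 \<le> (\<Sum>\<sigma>\<in>{\<sigma>. \<sigma> permutes {0..<2*n}}. ?t \<sigma>)"
    using nonneg by (intro member_le_sum[where i = id, THEN order.trans[rotated]])
      (auto simp: finite_permutations permutes_id)
  then show ?thesis
    unfolding Pf_def by simp
qed

lemma Sp_det:
  assumes "P \<in> Sp n"
  shows "det P = 1"
proof -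
  from assms have P: "P \<in> carrier_mat (2*n) (2*n)" and PJ: "transpose_mat P * Jsymp n * P = Jsymp n"
    by (auto simp: Sp_def)
  have "Pf n (Jsymp n) = det P * Pf n (Jsymp n)"
    using Pf_congruence[OF Jsymp_carrier P] PJ by simp
  then show ?thesis
    using Pf_Jsymp_pos[of n] by simp
qed

definition mat_trace :: "'a::comm_semiring_0 mat \<Rightarrow> 'a" where
  "mat_trace A = (\<Sum>i<dim_row A. A $$ (i,i))"

lemma mat_trace_mult_comm:
  fixes A B :: "'a::comm_semiring_0 mat"
  assumes "A \<in> carrier_mat n m" "B \<in> carrier_mat m n"
  shows "mat_trace (A * B) = mat_trace (B * A)"
  using assms unfolding mat_trace_def
  by (simp add: scalar_prod_def atLeast0LessThan mult.commute) (rule sum.swap)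

lemma transpose_Jsymp_mult_Jsymp: "transpose_mat (Jsymp n) * Jsymp n = 1\<^sub>m (2*n)"
proof (rule eq_matI)
  fix a b assume "a < dim_row (1\<^sub>m (2*n))" "b < dim_col (1\<^sub>m (2*n))"
  then have a: "a < 2*n" and b: "b < 2*n" by auto
  have a_succ: "even a \<Longrightarrow> a + 1 < 2*n"
    using a by presburger
  have "(transpose_mat (Jsymp n) * Jsymp n) $$ (a,b) = (\<Sum>c<2*n. Jsymp n $$ (c,a) * Jsymp n $$ (c,b))"
    using a b by (simp add: Jsymp_carrier[THEN carrier_matD(1)] Jsymp_carrier[THEN carrier_matD(2)]
        scalar_prod_def atLeast0LessThan)
  also have "\<dots> = (if even a then - Jsymp n $$ (a+1, b) else Jsymp n $$ (a-1, b))"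
    using a a_succ by (simp add: Jsymp_col if_distrib[of "\<lambda>x. x * _"] sum.If_cases Int_def cong: if_cong) linarith
  also have "\<dots> = 1\<^sub>m (2*n) $$ (a,b)"
    using a b by (auto simp: Jsymp_index elim!: evenE oddE)
  finally show "(transpose_mat (Jsymp n) * Jsymp n) $$ (a,b) = 1\<^sub>m (2*n) $$ (a,b)" .
qed (simp_all add: Jsymp_def)

lemma congruence_preserves_inverse:
  fixes M S T :: "'a::field mat"
  assumes M: "M \<in> carrier_mat n n" and S: "S \<in> carrier_mat n n" and T: "T \<in> carrier_mat n n"
    and MSM: "transpose_mat M * S * M = S" and TS: "T * S = 1\<^sub>m n"
  shows "M * T * transpose_mat M = T"
proof -
  have "transpose_mat M * (S * M * T) = (transpose_mat M * S * M) * T"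
    using M S T by (simp add: assoc_mult_mat[of _ n n _ n _ n])
  also have "\<dots> = 1\<^sub>m n"
    using MSM mat_mult_left_right_inverse[OF T S TS] by simp
  finally have "(S * M * T) * transpose_mat M = 1\<^sub>m n"
    by (rule mat_mult_left_right_inverse[rotated 2]) (use M S T in auto)
  then have "T * S * (M * T * transpose_mat M) = T"
    using M S T by (simp add: assoc_mult_mat[of _ n n _ n _ n])
  then show ?thesis
    using M T TS by simp
qed

lemma Sp_preserves_transpose_Jsymp:
  assumes "P \<in> Sp n"
  shows "P * transpose_mat (Jsymp n) * transpose_mat P = transpose_mat (Jsymp n)"
  using assms transpose_Jsymp_mult_Jsymp Jsymp_carrier
  by (intro congruence_preserves_inverse[of _ "2*n" "Jsymp n"]) (auto simp: Sp_def)

lemma mat_trace_transpose_Jsymp_mult: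
  assumes X: "X \<in> carrier_mat (2*n) (2*n)" and skew: "transpose_mat X = - X"
  shows "mat_trace (transpose_mat (Jsymp n) * X) = 2 * ssum n X"
proof -
  have X_skew: "X $$ (b,a) = - X $$ (a,b)" if "a < 2*n" "b < 2*n" for a b
    using arg_cong[OF skew, of "\<lambda>M. M $$ (a,b)"] X that by simp
  have "mat_trace (transpose_mat (Jsymp n) * X) = (\<Sum>a<2*n. \<Sum>c<2*n. Jsymp n $$ (c,a) * X $$ (c,a))"
    using X Jsymp_carrier[of n] by (simp add: mat_trace_def scalar_prod_def atLeast0LessThan)
  also have "\<dots> = (\<Sum>i<n. (\<Sum>c<2*n. Jsymp n $$ (c, 2*i) * X $$ (c, 2*i))
      + (\<Sum>c<2*n. Jsymp n $$ (c, 2*i+1) * X $$ (c, 2*i+1)))"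
    by (rule sum_lessThan_pairs)
  also have "\<dots> = (\<Sum>i<n. 2 * X $$ (2*i, 2*i+1))"
  proof (rule sum.cong[OF refl])
    fix i assume "i \<in> {..<n}"
    then have "2*i < 2*n" "2*i+1 < 2*n" by auto
    then show "(\<Sum>c<2*n. Jsymp n $$ (c, 2*i) * X $$ (c, 2*i)) + (\<Sum>c<2*n. Jsymp n $$ (c, 2*i+1) * X $$ (c, 2*i+1))
        = 2 * X $$ (2*i, 2*i+1)"
      using X_skew[of "2*i" "2*i+1"]
      by (simp add: Jsymp_col if_distrib[of "\<lambda>x. x * _"] sum.If_cases Int_def cong: if_cong)
  qed
  also have "\<dots> = 2 * ssum n X"
    by (simp add: ssum_def sum_distrib_left)
  finally show ?thesis .
qed

lemma ssum_congruence:
  assumes A: "A \<in> carrier_mat (2*n) (2*n)" and skew: "transpose_mat A = - A" and P: "P \<in> Sp n"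
  shows "ssum n (transpose_mat P * A * P) = ssum n A"
proof -
  let ?J = "transpose_mat (Jsymp n)"
  have Pc: "P \<in> carrier_mat (2*n) (2*n)" using P by (simp add: Sp_def)
  have J: "?J \<in> carrier_mat (2*n) (2*n)" using Jsymp_carrier by simp
  have "transpose_mat (transpose_mat P * A * P) = transpose_mat P * transpose_mat A * P"
    using A Pc by (simp add: transpose_mult[of _ "2*n" "2*n" _ "2*n"] assoc_mult_mat[of _ "2*n" "2*n" _ "2*n" _ "2*n"])
  also have "\<dots> = - (transpose_mat P * A * P)"
    using A Pc skew by simp
  finally have skew': "transpose_mat (transpose_mat P * A * P) = - (transpose_mat P * A * P)" .
  have "2 * ssum n (transpose_mat P * A * P) = mat_trace (?J * (transpose_mat P * A * P))"
    using A Pc skew' by (simp add: mat_trace_transpose_Jsymp_mult)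
  also have "\<dots> = mat_trace ((?J * transpose_mat P * A) * P)"
    using A Pc J by (simp add: assoc_mult_mat[of _ "2*n" "2*n" _ "2*n" _ "2*n"])
  also have "\<dots> = mat_trace (P * (?J * transpose_mat P * A))"
    using A Pc J by (intro mat_trace_mult_comm[of _ "2*n" "2*n"]) auto
  also have "\<dots> = mat_trace ((P * ?J * transpose_mat P) * A)"
    using A Pc J by (simp add: assoc_mult_mat[of _ "2*n" "2*n" _ "2*n" _ "2*n"])
  also have "\<dots> = 2 * ssum n A"
    using A skew by (simp add: Sp_preserves_transpose_Jsymp[OF P] mat_trace_transpose_Jsymp_mult)
  finally show ?thesis by simp
qed

theorem theorem2p7:
  fixes n :: nat and A P :: "real mat"
  assumes "A \<in> skew_nonsing n" and "P \<in> Sp n"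
  shows "Pf n (transpose_mat P * A * P) = Pf n A \<and> ssum n (transpose_mat P * A * P) = ssum n A"
proof
  have A: "A \<in> carrier_mat (2*n) (2*n)" and skew: "transpose_mat A = - A"
    using assms(1) by (auto simp: skew_nonsing_def)
  have P: "P \<in> carrier_mat (2*n) (2*n)"
    using assms(2) by (simp add: Sp_def)
  show "Pf n (transpose_mat P * A * P) = Pf n A"
    using Pf_congruence[OF A P] Sp_det[OF assms(2)] by simp
  show "ssum n (transpose_mat P * A * P) = ssum n A"
    by (rule ssum_congruence[OF A skew assms(2)])
qed

end
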